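(* Let $p$ be a prime with $p\mid n$, $e\in\mathbb{N}$, and let $\{R_j\}_{j\in J}$ be a system of representatives of the right cosets in $\Gamma_0(p^{e+1}n)\backslash\Gamma_0(pn)$. Then $\{B_pR_jB_p^{-1}\}_{j\in J}$ is a system of representatives of the right cosets in $\Gamma_0(p^en)\backslash\Gamma_0(n)$.
   Context: $B_p=\begin{pmatrix}p&0\\0&1\end{pmatrix}$; $\Gamma_0(N)=\{\begin{pmatrix}a&b\\c&d\end{pmatrix}\in SL(2,\mathbb{Z}):N\mid c\}$. A system of representatives $\{R_j\}$ of the right cosets in $H\backslash G$ means $G=\bigsqcup_jHR_j$ (disjoint union). For $g\in\Gamma_0(pn)$, $B_pgB_p^{-1}\in SL(2,\mathbb{Z})$. *)

theory Defs
  imports "HOL-Analysis.Analysis"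
begin

text \<open>2x2 matrices are modelled as real matrices (type real^2^2), so that the
conjugate B_p g B_p^{-1} (which involves the non-integral matrix B_p^{-1}) makes sense.\<close>

definition SL2Z :: "(real^2^2) set" where
  "SL2Z = {g. (\<forall>i j. g $ i $ j \<in> \<int>) \<and> det g = 1}"

definition Gamma0 :: "nat \<Rightarrow> (real^2^2) set" where
  "Gamma0 N = {g \<in> SL2Z. \<exists>k::int. g $ 2 $ 1 = of_int (int N * k)}"

definition Bmat :: "nat \<Rightarrow> real^2^2" where
  "Bmat p = (\<chi> i j. if i = 1 \<and> j = 1 then real p
                     else if i = 2 \<and> j = 2 then 1 else 0)"

definition rcoset :: "(real^2^2) set \<Rightarrow> real^2^2 \<Rightarrow> (real^2^2) set" where
  "rcoset H g = {h ** g | h. h \<in> H}"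

definition rcoset_reps :: "(real^2^2) set \<Rightarrow> (real^2^2) set \<Rightarrow> ('j \<Rightarrow> real^2^2) \<Rightarrow> 'j set \<Rightarrow> bool" where
  "rcoset_reps H G R J \<longleftrightarrow>
     G = (\<Union>j\<in>J. rcoset H (R j)) \<and>
     (\<forall>j\<in>J. \<forall>k\<in>J. j \<noteq> k \<longrightarrow> rcoset H (R j) \<inter> rcoset H (R k) = {})"

end

theory Submission
  imports Defs
begin

text \<open>Conjugation by \<open>B\<^sub>p\<close> multiplies the upper right entry of a matrix by \<open>p\<close> and divides
the lower left one by \<open>p\<close>, so for \<open>g \<in> SL(2,\<int>)\<close> the conjugate \<open>B\<^sub>p g B\<^sub>p\<^sup>-\<^sup>1\<close> lies in
\<open>\<Gamma>\<^sub>0(M)\<close> exactly when \<open>g \<in> \<Gamma>\<^sub>0(pM)\<close>. Hence \<open>\<Gamma>\<^sub>0(p\<^sup>e\<^sup>+\<^sup>1n)\<close> is the full preimage of \<open>\<Gamma>\<^sub>0(p\<^sup>en)\<close> in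
\<open>\<Gamma>\<^sub>0(pn)\<close>, which keeps distinct cosets distinct. For the covering, \<open>p | n\<close> is used: left
multiplication by an upper unipotent integer matrix, which lies in every \<open>\<Gamma>\<^sub>0(N)\<close>, turns any
element of \<open>\<Gamma>\<^sub>0(n)\<close> into one with upper right entry divisible by \<open>p\<close>, i.e. into a conjugate
\<open>B\<^sub>p \<gamma> B\<^sub>p\<^sup>-\<^sup>1\<close> with \<open>\<gamma> \<in> \<Gamma>\<^sub>0(pn)\<close>.\<close>

lemma matrix_inv_unique:
  fixes A B :: "'a::field^'n^'n"
  assumes "A ** B = mat 1"
  shows "matrix_inv A = B"
proof -
  have "B ** A = mat 1"
    using assms matrix_left_right_inverse by blast
  with assms have "A ** matrix_inv A = mat 1 \<and> matrix_inv A ** A = mat 1"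
    unfolding matrix_inv_def
    by (rule someI[where P = "\<lambda>A'. A ** A' = mat 1 \<and> A' ** A = mat 1", OF conjI])
  then have "matrix_inv A = matrix_inv A ** (A ** B)"
    using assms by simp
  also have "\<dots> = B"
    using \<open>A ** matrix_inv A = mat 1 \<and> matrix_inv A ** A = mat 1\<close> by (simp add: matrix_mul_assoc)
  finally show ?thesis .
qed

lemma matrix_inv_right:
  fixes A :: "'a::field^'n^'n"
  assumes "invertible A"
  shows "A ** matrix_inv A = mat 1"
  using assms matrix_inv_unique invertible_right_inverse by metis

lemma matrix_inv_left:
  fixes A :: "'a::field^'n^'n"
  assumes "invertible A"
  shows "matrix_inv A ** A = mat 1"
  using matrix_inv_right[OF assms] matrix_left_right_inverse by blast

lemma conjugate_mat_1:
  fixes B :: "'a::field^'n^'n"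
  assumes "invertible B"
  shows "B ** mat 1 ** matrix_inv B = mat 1"
  using matrix_inv_right[OF assms] by simp

lemma conjugate_mult:
  fixes B x y :: "'a::field^'n^'n"
  assumes "invertible B"
  shows "B ** (x ** y) ** matrix_inv B = (B ** x ** matrix_inv B) ** (B ** y ** matrix_inv B)"
proof -
  have "(B ** x ** matrix_inv B) ** (B ** y ** matrix_inv B)
      = B ** x ** (matrix_inv B ** B) ** y ** matrix_inv B"
    by (simp add: matrix_mul_assoc)
  then show ?thesis
    by (simp add: matrix_inv_left[OF assms] matrix_mul_assoc)
qed

definition matrix_group :: "('a::field^'n^'n) set \<Rightarrow> bool" where
  "matrix_group S \<longleftrightarrow> mat 1 \<in> S \<and> (\<forall>x\<in>S. \<forall>y\<in>S. x ** y \<in> S) \<and>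
     (\<forall>x\<in>S. invertible x \<and> matrix_inv x \<in> S)"

lemma conjugate_rcosets_cover:
  fixes B :: "real^2^2"
  assumes B: "invertible B" and G': "matrix_group G'" and H': "matrix_group H'" and "H' \<subseteq> G'"
    and conj_G: "\<And>g. g \<in> G \<Longrightarrow> B ** g ** matrix_inv B \<in> G'"
    and conj_H: "\<And>h. h \<in> H \<Longrightarrow> B ** h ** matrix_inv B \<in> H'"
    and factor: "\<And>g'. g' \<in> G' \<Longrightarrow> \<exists>h'\<in>H'. \<exists>g\<in>G. g' = h' ** (B ** g ** matrix_inv B)"
    and cover: "G = (\<Union>j\<in>J. rcoset H (R j))" and "R ` J \<subseteq> G"
  shows "G' = (\<Union>j\<in>J. rcoset H' (B ** R j ** matrix_inv B))"
proof (intro equalityI subsetI)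
  fix g' assume "g' \<in> G'"
  then obtain h' g where "h' \<in> H'" "g \<in> G" and g': "g' = h' ** (B ** g ** matrix_inv B)"
    using factor by blast
  then obtain j h where "j \<in> J" "h \<in> H" and g: "g = h ** R j"
    using cover unfolding rcoset_def by blast
  have "g' = (h' ** (B ** h ** matrix_inv B)) ** (B ** R j ** matrix_inv B)"
    unfolding g' g conjugate_mult[OF B] by (simp add: matrix_mul_assoc)
  moreover have "h' ** (B ** h ** matrix_inv B) \<in> H'"
    using \<open>h' \<in> H'\<close> \<open>h \<in> H\<close> conj_H H' unfolding matrix_group_def by blast
  ultimately show "g' \<in> (\<Union>j\<in>J. rcoset H' (B ** R j ** matrix_inv B))"
    using \<open>j \<in> J\<close> unfolding rcoset_def by blast
next
  fix g' assume "g' \<in> (\<Union>j\<in>J. rcoset H' (B ** R j ** matrix_inv B))"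
  then obtain j h' where "j \<in> J" "h' \<in> H'" "g' = h' ** (B ** R j ** matrix_inv B)"
    unfolding rcoset_def by blast
  then show "g' \<in> G'"
    using \<open>H' \<subseteq> G'\<close> \<open>R ` J \<subseteq> G\<close> G' conj_G unfolding matrix_group_def by blast
qed

lemma conjugate_rcosets_meet_imp_rcoset:
  fixes B :: "real^2^2"
  assumes B: "invertible B" and G: "matrix_group G" and H': "matrix_group H'"
    and conj_H: "\<And>g. g \<in> G \<Longrightarrow> B ** g ** matrix_inv B \<in> H' \<Longrightarrow> g \<in> H"
    and "x \<in> G" "y \<in> G"
    and "rcoset H' (B ** x ** matrix_inv B) \<inter> rcoset H' (B ** y ** matrix_inv B) \<noteq> {}"
  shows "x \<in> rcoset H y"
proof -
  let ?c = "\<lambda>g. B ** g ** matrix_inv B"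
  obtain h h' where "h \<in> H'" "h' \<in> H'" and eq: "h ** ?c x = h' ** ?c y"
    using assms(7) unfolding rcoset_def by blast
  define m where "m = x ** matrix_inv y"
  have "invertible y" "matrix_inv y \<in> G" "invertible h"
    using \<open>y \<in> G\<close> G \<open>h \<in> H'\<close> H' unfolding matrix_group_def by auto
  have "?c m = ?c x ** ?c (matrix_inv y)"
    unfolding m_def by (rule conjugate_mult[OF B])
  also have "\<dots> = matrix_inv h ** (h ** ?c x) ** ?c (matrix_inv y)"
    using matrix_inv_left[OF \<open>invertible h\<close>] by (simp add: matrix_mul_assoc)
  also have "\<dots> = matrix_inv h ** h' ** ?c (y ** matrix_inv y)"
    unfolding eq conjugate_mult[OF B] by (simp add: matrix_mul_assoc)
  also have "\<dots> = matrix_inv h ** h'"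
    using matrix_inv_right[OF \<open>invertible y\<close>] conjugate_mat_1[OF B] by simp
  finally have "?c m \<in> H'"
    using \<open>h \<in> H'\<close> \<open>h' \<in> H'\<close> H' unfolding matrix_group_def by simp
  moreover have "m \<in> G"
    using \<open>x \<in> G\<close> \<open>matrix_inv y \<in> G\<close> G unfolding m_def matrix_group_def by blast
  ultimately have "m \<in> H"
    using conj_H by blast
  moreover have "x = m ** y"
    using matrix_inv_left[OF \<open>invertible y\<close>] unfolding m_def
    by (metis matrix_mul_assoc matrix_mul_rid)
  ultimately show ?thesis
    unfolding rcoset_def by blast
qed

lemma rcoset_reps_conjugate:
  fixes B :: "real^2^2"
  assumes B: "invertible B"
    and G: "matrix_group G" and G': "matrix_group G'" and H': "matrix_group H'"
    and "H \<subseteq> G" and "H' \<subseteq> G'"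
    and conj_G: "\<And>g. g \<in> G \<Longrightarrow> B ** g ** matrix_inv B \<in> G'"
    and conj_H: "\<And>g. g \<in> G \<Longrightarrow> B ** g ** matrix_inv B \<in> H' \<longleftrightarrow> g \<in> H"
    and factor: "\<And>g'. g' \<in> G' \<Longrightarrow> \<exists>h'\<in>H'. \<exists>g\<in>G. g' = h' ** (B ** g ** matrix_inv B)"
    and reps: "rcoset_reps H G R J"
  shows "rcoset_reps H' G' (\<lambda>j. B ** R j ** matrix_inv B) J"
proof -
  have cover: "G = (\<Union>j\<in>J. rcoset H (R j))"
    and disjoint: "\<And>j k. j \<in> J \<Longrightarrow> k \<in> J \<Longrightarrow> j \<noteq> k \<Longrightarrow> rcoset H (R j) \<inter> rcoset H (R k) = {}"
    using reps unfolding rcoset_reps_def by auto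
  have "mat 1 \<in> H"
    using conj_H[of "mat 1"] G H' conjugate_mat_1[OF B] unfolding matrix_group_def by auto
  then have R_self: "R j \<in> rcoset H (R j)" for j
    unfolding rcoset_def by force
  then have "R ` J \<subseteq> G"
    using cover by blast
  have "G' = (\<Union>j\<in>J. rcoset H' (B ** R j ** matrix_inv B))"
    using conjugate_rcosets_cover[OF B G' H' \<open>H' \<subseteq> G'\<close> conj_G _ factor cover \<open>R ` J \<subseteq> G\<close>]
      conj_H \<open>H \<subseteq> G\<close> by blast
  moreover have "rcoset H' (B ** R j ** matrix_inv B) \<inter> rcoset H' (B ** R k ** matrix_inv B) = {}"
    if "j \<in> J" "k \<in> J" "j \<noteq> k" for j k
    using conjugate_rcosets_meet_imp_rcoset[OF B G H', of H "R j" "R k"] conj_H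
      \<open>R ` J \<subseteq> G\<close> that disjoint[OF that] R_self[of j] by blast
  ultimately show ?thesis
    unfolding rcoset_reps_def by blast
qed

definition mat2 :: "'a \<Rightarrow> 'a \<Rightarrow> 'a \<Rightarrow> 'a \<Rightarrow> 'a^2^2" where
  "mat2 a b c d = (\<chi> i j. if i = 1 then (if j = 1 then a else b) else (if j = 1 then c else d))"

lemma mat2_nth [simp]:
  "mat2 a b c d $ 1 $ 1 = a" "mat2 a b c d $ 1 $ 2 = b"
  "mat2 a b c d $ 2 $ 1 = c" "mat2 a b c d $ 2 $ 2 = d"
  by (simp_all add: mat2_def)

lemma mat2_eq_iff: "mat2 a b c d = mat2 a' b' c' d' \<longleftrightarrow> a = a' \<and> b = b' \<and> c = c' \<and> d = d'"
  unfolding vec_eq_iff forall_2 by simp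

lemma mat2_cases: "(m :: 'a^2^2) = mat2 (m$1$1) (m$1$2) (m$2$1) (m$2$2)"
  unfolding vec_eq_iff forall_2 by simp

lemma mat2_mult:
  fixes a b c d :: "'a::semiring_1"
  shows "mat2 a b c d ** mat2 a' b' c' d' =
    mat2 (a*a' + b*c') (a*b' + b*d') (c*a' + d*c') (c*b' + d*d')"
  unfolding vec_eq_iff forall_2 by (simp add: matrix_matrix_mult_def sum_2)

lemma mat2_mat_1: "mat 1 = mat2 1 0 0 (1 :: 'a::zero_neq_one)"
  unfolding vec_eq_iff forall_2 by (simp add: mat_def)

lemma det_mat2: "det (mat2 a b c (d :: 'a::comm_ring_1)) = a*d - b*c"
  by (simp add: det_2)

lemma SL2Z_iff:
  "g \<in> SL2Z \<longleftrightarrow> (\<exists>a b c d :: int. g = mat2 (of_int a) (of_int b) (of_int c) (of_int d) \<and> a*d - b*c = 1)"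
proof
  assume "g \<in> SL2Z"
  then have ints: "\<forall>i j. g$i$j \<in> \<int>" and "det g = 1"
    unfolding SL2Z_def by auto
  obtain a b c d :: int where "g$1$1 = a" "g$1$2 = b" "g$2$1 = c" "g$2$2 = d"
    using ints Ints_cases by metis
  then have g: "g = mat2 a b c d"
    using mat2_cases[of g] by simp
  then have "real_of_int (a*d - b*c) = 1"
    using \<open>det g = 1\<close> by (simp add: det_mat2)
  then show "\<exists>a b c d :: int. g = mat2 (of_int a) (of_int b) (of_int c) (of_int d) \<and> a*d - b*c = 1"
    using g of_int_eq_1_iff by blast
next
  assume "\<exists>a b c d :: int. g = mat2 (of_int a) (of_int b) (of_int c) (of_int d) \<and> a*d - b*c = 1"
  then obtain a b c d :: int where g: "g = mat2 a b c d" and det: "a*d - b*c = 1"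
    by blast
  have "det g = 1"
    unfolding g det_mat2 using det by (metis of_int_1 of_int_diff of_int_mult)
  moreover have "\<forall>i j. g$i$j \<in> \<int>"
    unfolding g forall_2 by simp
  ultimately show "g \<in> SL2Z"
    unfolding SL2Z_def by blast
qed

lemma Gamma0_iff:
  "g \<in> Gamma0 N \<longleftrightarrow>
     (\<exists>a b c d :: int. g = mat2 (of_int a) (of_int b) (of_int c) (of_int d) \<and> a*d - b*c = 1 \<and> int N dvd c)"
proof
  assume "g \<in> Gamma0 N"
  then obtain a b c d k :: int where g: "g = mat2 (of_int a) (of_int b) (of_int c) (of_int d)"
    and "a*d - b*c = 1" and "g$2$1 = of_int (int N * k)"
    unfolding Gamma0_def SL2Z_iff by blast
  moreover from this have "int N dvd c"
    by (metis dvd_triv_left mat2_nth(3) of_int_eq_iff)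
  ultimately show "\<exists>a b c d :: int. g = mat2 (of_int a) (of_int b) (of_int c) (of_int d) \<and>
      a*d - b*c = 1 \<and> int N dvd c"
    by blast
next
  assume "\<exists>a b c d :: int. g = mat2 (of_int a) (of_int b) (of_int c) (of_int d) \<and>
      a*d - b*c = 1 \<and> int N dvd c"
  then obtain a b c d k :: int where g: "g = mat2 (of_int a) (of_int b) (of_int c) (of_int d)"
    and "a*d - b*c = 1" and "c = int N * k"
    by (blast elim: dvdE)
  moreover from this have "g$2$1 = of_int (int N * k)"
    by simp
  ultimately show "g \<in> Gamma0 N"
    unfolding Gamma0_def SL2Z_iff by blast
qed

lemma Gamma0_subset_SL2Z: "Gamma0 N \<subseteq> SL2Z"
  unfolding Gamma0_def by blast

lemma Gamma0_subset_of_dvd: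
  assumes "N dvd M"
  shows "Gamma0 M \<subseteq> Gamma0 N"
proof
  fix g assume "g \<in> Gamma0 M"
  then obtain a b c d :: int
    where "g = mat2 (of_int a) (of_int b) (of_int c) (of_int d)" "a*d - b*c = 1" "int M dvd c"
    unfolding Gamma0_iff by blast
  moreover have "int N dvd c"
    using assms \<open>int M dvd c\<close> by (meson dvd_trans int_dvd_int_iff)
  ultimately show "g \<in> Gamma0 N"
    unfolding Gamma0_iff by blast
qed

lemma upper_unipotent_in_Gamma0: "mat2 1 (of_int t) 0 1 \<in> Gamma0 N"
  unfolding Gamma0_iff by (intro exI[of _ 1] exI[of _ t] exI[of _ 0] exI[of _ 1]) simp

lemma matrix_group_Gamma0: "matrix_group (Gamma0 N)"
  unfolding matrix_group_def
proof (intro conjI ballI)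
  show "mat 1 \<in> Gamma0 N"
    using upper_unipotent_in_Gamma0[of 0 N] by (simp add: mat2_mat_1)
next
  fix g h assume "g \<in> Gamma0 N" "h \<in> Gamma0 N"
  then obtain a b c d a' b' c' d' :: int
    where g: "g = mat2 a b c d" "a*d - b*c = 1" "int N dvd c"
      and h: "h = mat2 a' b' c' d'" "a'*d' - b'*c' = 1" "int N dvd c'"
    unfolding Gamma0_iff by blast
  moreover have "g ** h = mat2 (of_int (a*a' + b*c')) (of_int (a*b' + b*d'))
      (of_int (c*a' + d*c')) (of_int (c*b' + d*d'))"
    unfolding g(1) h(1) mat2_mult by simp
  moreover have "(a*a' + b*c') * (c*b' + d*d') - (a*b' + b*d') * (c*a' + d*c')
      = (a*d - b*c) * (a'*d' - b'*c')"
    by algebra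
  ultimately show "g ** h \<in> Gamma0 N"
    unfolding Gamma0_iff by (metis dvd_add dvd_mult2 dvd_mult mult_1)
next
  fix g assume "g \<in> Gamma0 N"
  then obtain a b c d :: int where g: "g = mat2 a b c d" and det: "a*d - b*c = 1" and "int N dvd c"
    unfolding Gamma0_iff by blast
  have "real_of_int a * real_of_int d - real_of_int b * real_of_int c = 1"
    using det by (metis of_int_1 of_int_diff of_int_mult)
  then have inv: "g ** mat2 d (- b) (- c) a = mat 1"
    unfolding g mat2_mult mat2_mat_1 mat2_eq_iff by (simp add: algebra_simps)
  then show "invertible g"
    using invertible_right_inverse by blast
  have "mat2 (of_int d) (of_int (- b)) (of_int (- c)) (of_int a) \<in> Gamma0 N"
    unfolding Gamma0_iff using det \<open>int N dvd c\<close> by (fastforce simp: algebra_simps)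
  then show "matrix_inv g \<in> Gamma0 N"
    using matrix_inv_unique[OF inv] by simp
qed

lemma Bmat_eq: "Bmat p = mat2 (real p) 0 0 1"
  unfolding vec_eq_iff forall_2 by (simp add: Bmat_def)

lemma matrix_inv_Bmat:
  assumes "p > 0"
  shows "matrix_inv (Bmat p) = mat2 (1 / real p) 0 0 1"
  using assms by (intro matrix_inv_unique) (simp add: Bmat_eq mat2_mult mat2_mat_1)

lemma invertible_Bmat:
  assumes "p > 0"
  shows "invertible (Bmat p)"
  using assms by (auto simp: invertible_right_inverse Bmat_eq mat2_mult mat2_mat_1
      intro!: exI[of _ "mat2 (1 / real p) 0 0 1"])

lemma Bmat_conjugate_mat2:
  assumes "p > 0"
  shows "Bmat p ** mat2 a b c d ** matrix_inv (Bmat p) = mat2 a (real p * b) (c / real p) d"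
  using assms unfolding matrix_inv_Bmat[OF assms] by (simp add: Bmat_eq mat2_mult)

lemma Bmat_conjugate_in_Gamma0_iff:
  assumes "p > 0" and "g \<in> SL2Z"
  shows "Bmat p ** g ** matrix_inv (Bmat p) \<in> Gamma0 M \<longleftrightarrow> g \<in> Gamma0 (p * M)"
proof -
  obtain a b c d :: int where g: "g = mat2 a b c d" and det: "a*d - b*c = 1"
    using assms(2) unfolding SL2Z_iff by blast
  have conj: "Bmat p ** g ** matrix_inv (Bmat p) = mat2 a (real p * b) (c / real p) d"
    unfolding g using assms(1) by (rule Bmat_conjugate_mat2)
  show ?thesis
  proof
    assume "Bmat p ** g ** matrix_inv (Bmat p) \<in> Gamma0 M"
    then obtain c' :: int where c': "c / real p = c'" and "int M dvd c'"
      unfolding conj Gamma0_iff mat2_eq_iff by auto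
    have "real_of_int c = real_of_int (int p * c')"
      using assms(1) c' by (simp add: field_simps)
    then have "c = int p * c'"
      by (simp only: of_int_eq_iff)
    then have "int (p * M) dvd c"
      using \<open>int M dvd c'\<close> by simp
    then show "g \<in> Gamma0 (p * M)"
      unfolding Gamma0_iff using g det by blast
  next
    assume "g \<in> Gamma0 (p * M)"
    then have "int (p * M) dvd c"
      unfolding Gamma0_iff g mat2_eq_iff by auto
    then obtain k where k: "c = int p * (int M * k)"
      by (metis dvdE mult.assoc of_nat_mult)
    have "Bmat p ** g ** matrix_inv (Bmat p)
        = mat2 (of_int a) (of_int (int p * b)) (of_int (int M * k)) (of_int d)"
      unfolding conj k using assms(1) by simp
    moreover have "a*d - (int p * b) * (int M * k) = 1"
      using det k by (simp add: algebra_simps)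
    ultimately show "Bmat p ** g ** matrix_inv (Bmat p) \<in> Gamma0 M"
      unfolding Gamma0_iff by (meson dvd_triv_left)
  qed
qed

lemma Gamma0_factor_unipotent_Bmat_conjugate:
  assumes "p > 0" and "p dvd n" and "g \<in> Gamma0 n"
  shows "\<exists>t::int. \<exists>g1\<in>Gamma0 (p * n). g = mat2 1 (of_int t) 0 1 ** (Bmat p ** g1 ** matrix_inv (Bmat p))"
proof -
  obtain a b c d :: int where g: "g = mat2 a b c d" and det: "a*d - b*c = 1" and "int n dvd c"
    using assms(3) unfolding Gamma0_iff by blast
  have "int p dvd c"
    using \<open>int n dvd c\<close> assms(2) by (meson dvd_trans int_dvd_int_iff)
  txt \<open>The witness comes from multiplying \<open>g\<close> on the left by \<open>[1, -ab; 0, 1]\<close>: the new upper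
    right entry \<open>b - abd = -b\<^sup>2c\<close> is divisible by \<open>p\<close>.\<close>
  have "b - a*b*d = - b*b*c"
    using det by algebra
  then obtain s where s: "b - a*b*d = int p * s"
    using \<open>int p dvd c\<close> by (metis dvd_mult dvd_def)
  define g1 :: "real^2^2" where "g1 = mat2 (of_int (a - a*b*c)) (of_int s) (of_int (int p * c)) (of_int d)"
  have "g1 \<in> Gamma0 (p * n)"
    unfolding Gamma0_iff g1_def
  proof (intro exI conjI)
    show "(a - a*b*c) * d - s * (int p * c) = 1"
      using det s by algebra
  qed (use \<open>int n dvd c\<close> in auto)
  have "Bmat p ** g1 ** matrix_inv (Bmat p)
      = mat2 (of_int (a - a*b*c)) (of_int (b - a*b*d)) (of_int c) (of_int d)"
    unfolding g1_def Bmat_conjugate_mat2[OF assms(1)] s using assms(1) by simp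
  then have "g = mat2 1 (of_int (a*b)) 0 1 ** (Bmat p ** g1 ** matrix_inv (Bmat p))"
    unfolding g by (simp add: mat2_mult mat2_eq_iff algebra_simps)
  with \<open>g1 \<in> Gamma0 (p * n)\<close> show ?thesis
    by blast
qed

theorem mainTheorem10:
  fixes p n e :: nat and R :: "'j \<Rightarrow> real^2^2" and J :: "'j set"
  assumes "prime p" and "p dvd n"
    and "rcoset_reps (Gamma0 (p ^ (e + 1) * n)) (Gamma0 (p * n)) R J"
  shows "rcoset_reps (Gamma0 (p ^ e * n)) (Gamma0 n)
           (\<lambda>j. Bmat p ** R j ** matrix_inv (Bmat p)) J"
proof -
  have "p > 0"
    using assms(1) prime_gt_0_nat by blast
  show ?thesis
  proof (rule rcoset_reps_conjugate)
    show "invertible (Bmat p)"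
      using \<open>p > 0\<close> by (rule invertible_Bmat)
    show "Gamma0 (p ^ (e + 1) * n) \<subseteq> Gamma0 (p * n)" "Gamma0 (p ^ e * n) \<subseteq> Gamma0 n"
      by (simp_all add: Gamma0_subset_of_dvd)
    show "Bmat p ** g ** matrix_inv (Bmat p) \<in> Gamma0 n" if "g \<in> Gamma0 (p * n)" for g
      using Bmat_conjugate_in_Gamma0_iff \<open>p > 0\<close> that Gamma0_subset_SL2Z by blast
    show "Bmat p ** g ** matrix_inv (Bmat p) \<in> Gamma0 (p ^ e * n) \<longleftrightarrow>
        g \<in> Gamma0 (p ^ (e + 1) * n)" if "g \<in> Gamma0 (p * n)" for g
      using Bmat_conjugate_in_Gamma0_iff[OF \<open>p > 0\<close>] that Gamma0_subset_SL2Z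
      by (fastforce simp: mult.assoc)
    show "\<exists>h\<in>Gamma0 (p ^ e * n). \<exists>g\<in>Gamma0 (p * n). g' = h ** (Bmat p ** g ** matrix_inv (Bmat p))"
      if "g' \<in> Gamma0 n" for g'
      using Gamma0_factor_unipotent_Bmat_conjugate[OF \<open>p > 0\<close> assms(2) that]
        upper_unipotent_in_Gamma0 by blast
  qed (use assms(3) matrix_group_Gamma0 in auto)
qed

end
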